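(* Let $L$ be a linear ordering and let $\Phi(L)$ be the colored linear ordering defined in the context. Then the structure $(L,<,s,p)$ is homogeneous if and only if $\Phi(L)$ is homogeneous.
   Context: For a linear ordering $L$, $s(x)$ is the immediate successor of $x$ if it exists and $x$ otherwise; $p(x)$ is the immediate predecessor of $x$ if it exists and $x$ otherwise. A structure is homogeneous if every isomorphism between finitely generated substructures extends to an automorphism. The equivalence relation $x\sim_1 y$ holds iff only finitely many elements lie between $x$ and $y$; its classes (1-blocks) are convex, and each is isomorphic to $\omega$, $\omega^*$, $\zeta$ or a finite $n\ge1$. $\Phi(L)$ is the quotient ordering $L/\sim_1$ (with $[x]<[y]$ iff $x<y$ for elements of distinct blocks), expanded by unary predicates $w,z,sw,c_n$ ($n\ge1$): $w([x])$ iff $[x]\cong\omega$, $z([x])$ iff $[x]\cong\zeta$, $sw([x])$ iff $[x]\cong\omega^*$, and $c_n([x])$ iff $[x]$ has exactly $n$ elements. $\Phi(L)$ is regarded as a structure in the language $(<,w,z,sw,\{c_n\}_{n\ge1})$. *)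

theory Defs
  imports Main
begin

definition strict_linear_on :: "'a set \<Rightarrow> ('a \<Rightarrow> 'a \<Rightarrow> bool) \<Rightarrow> bool" where
  "strict_linear_on A lt \<longleftrightarrow>
     (\<forall>x\<in>A. \<not> lt x x) \<and>
     (\<forall>x\<in>A. \<forall>y\<in>A. \<forall>z\<in>A. lt x y \<longrightarrow> lt y z \<longrightarrow> lt x z) \<and>
     (\<forall>x\<in>A. \<forall>y\<in>A. x \<noteq> y \<longrightarrow> lt x y \<or> lt y x)"

definition is_succ :: "'a set \<Rightarrow> ('a \<Rightarrow> 'a \<Rightarrow> bool) \<Rightarrow> 'a \<Rightarrow> 'a \<Rightarrow> bool" where
  "is_succ A lt x y \<longleftrightarrow> y \<in> A \<and> lt x y \<and> \<not> (\<exists>z\<in>A. lt x z \<and> lt z y)"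

definition is_pred :: "'a set \<Rightarrow> ('a \<Rightarrow> 'a \<Rightarrow> bool) \<Rightarrow> 'a \<Rightarrow> 'a \<Rightarrow> bool" where
  "is_pred A lt x y \<longleftrightarrow> y \<in> A \<and> lt y x \<and> \<not> (\<exists>z\<in>A. lt y z \<and> lt z x)"

definition succ_fn :: "'a set \<Rightarrow> ('a \<Rightarrow> 'a \<Rightarrow> bool) \<Rightarrow> 'a \<Rightarrow> 'a" where
  "succ_fn A lt x = (if \<exists>y. is_succ A lt x y then (THE y. is_succ A lt x y) else x)"

definition pred_fn :: "'a set \<Rightarrow> ('a \<Rightarrow> 'a \<Rightarrow> bool) \<Rightarrow> 'a \<Rightarrow> 'a" where
  "pred_fn A lt x = (if \<exists>y. is_pred A lt x y then (THE y. is_pred A lt x y) else x)"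

definition gen_sp :: "'a set \<Rightarrow> ('a \<Rightarrow> 'a \<Rightarrow> bool) \<Rightarrow> 'a set \<Rightarrow> 'a set" where
  "gen_sp A lt X = \<Inter> {S. X \<subseteq> S \<and> S \<subseteq> A \<and>
       (\<forall>x\<in>S. succ_fn A lt x \<in> S \<and> pred_fn A lt x \<in> S)}"

definition homogeneous_sp :: "'a set \<Rightarrow> ('a \<Rightarrow> 'a \<Rightarrow> bool) \<Rightarrow> bool" where
  "homogeneous_sp A lt \<longleftrightarrow>
    (\<forall>X Y f. finite X \<and> X \<subseteq> A \<and> finite Y \<and> Y \<subseteq> A \<and>
       bij_betw f (gen_sp A lt X) (gen_sp A lt Y) \<and>
       (\<forall>x\<in>gen_sp A lt X. \<forall>y\<in>gen_sp A lt X. lt x y \<longleftrightarrow> lt (f x) (f y)) \<and>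
       (\<forall>x\<in>gen_sp A lt X. f (succ_fn A lt x) = succ_fn A lt (f x) \<and>
                            f (pred_fn A lt x) = pred_fn A lt (f x))
     \<longrightarrow>
     (\<exists>g. bij_betw g A A \<and>
        (\<forall>x\<in>A. \<forall>y\<in>A. lt x y \<longleftrightarrow> lt (g x) (g y)) \<and>
        (\<forall>x\<in>A. g (succ_fn A lt x) = succ_fn A lt (g x) \<and>
                 g (pred_fn A lt x) = pred_fn A lt (g x)) \<and>
        (\<forall>x\<in>gen_sp A lt X. g x = f x)))"

definition betw :: "'a set \<Rightarrow> ('a \<Rightarrow> 'a \<Rightarrow> bool) \<Rightarrow> 'a \<Rightarrow> 'a \<Rightarrow> 'a set" where
  "betw A lt x y = {z\<in>A. (lt x z \<and> lt z y) \<or> (lt y z \<and> lt z x)}"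

definition sim1 :: "'a set \<Rightarrow> ('a \<Rightarrow> 'a \<Rightarrow> bool) \<Rightarrow> 'a \<Rightarrow> 'a \<Rightarrow> bool" where
  "sim1 A lt x y \<longleftrightarrow> x \<in> A \<and> y \<in> A \<and> finite (betw A lt x y)"

definition block :: "'a set \<Rightarrow> ('a \<Rightarrow> 'a \<Rightarrow> bool) \<Rightarrow> 'a \<Rightarrow> 'a set" where
  "block A lt x = {y. sim1 A lt x y}"

definition Phi_carrier :: "'a set \<Rightarrow> ('a \<Rightarrow> 'a \<Rightarrow> bool) \<Rightarrow> 'a set set" where
  "Phi_carrier A lt = block A lt ` A"

definition Phi_less :: "'a set \<Rightarrow> ('a \<Rightarrow> 'a \<Rightarrow> bool) \<Rightarrow> 'a set \<Rightarrow> 'a set \<Rightarrow> bool" where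
  "Phi_less A lt B C \<longleftrightarrow> B \<noteq> C \<and> (\<exists>x\<in>B. \<exists>y\<in>C. lt x y)"

definition order_iso_to :: "'a set \<Rightarrow> ('a \<Rightarrow> 'a \<Rightarrow> bool) \<Rightarrow> 'b set \<Rightarrow> ('b \<Rightarrow> 'b \<Rightarrow> bool) \<Rightarrow> bool" where
  "order_iso_to B lt S lt' \<longleftrightarrow>
     (\<exists>f. bij_betw f B S \<and> (\<forall>x\<in>B. \<forall>y\<in>B. lt x y \<longleftrightarrow> lt' (f x) (f y)))"

datatype color = W | Z | SW | C nat

fun Phi_col :: "'a set \<Rightarrow> ('a \<Rightarrow> 'a \<Rightarrow> bool) \<Rightarrow> 'a set \<Rightarrow> color \<Rightarrow> bool" where
  "Phi_col A lt B W = order_iso_to B lt (UNIV :: nat set) (<)"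
| "Phi_col A lt B Z = order_iso_to B lt (UNIV :: int set) (<)"
| "Phi_col A lt B SW = order_iso_to B lt (UNIV :: nat set) (>)"
| "Phi_col A lt B (C n) = (n \<ge> 1 \<and> finite B \<and> card B = n)"

text \<open>Homogeneity of a coloured (purely relational) linear ordering: finitely generated
  substructures are finite subsets.\<close>
definition homogeneous_col :: "'b set \<Rightarrow> ('b \<Rightarrow> 'b \<Rightarrow> bool) \<Rightarrow> ('b \<Rightarrow> 'c \<Rightarrow> bool) \<Rightarrow> bool" where
  "homogeneous_col D R Q \<longleftrightarrow>
    (\<forall>X Y f. finite X \<and> X \<subseteq> D \<and> Y \<subseteq> D \<and> bij_betw f X Y \<and>
       (\<forall>x\<in>X. \<forall>y\<in>X. R x y \<longleftrightarrow> R (f x) (f y)) \<and>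
       (\<forall>x\<in>X. \<forall>c. Q x c \<longleftrightarrow> Q (f x) c)
     \<longrightarrow>
     (\<exists>g. bij_betw g D D \<and>
        (\<forall>x\<in>D. \<forall>y\<in>D. R x y \<longleftrightarrow> R (g x) (g y)) \<and>
        (\<forall>x\<in>D. \<forall>c. Q x c \<longleftrightarrow> Q (g x) c) \<and>
        (\<forall>x\<in>X. g x = f x)))"

end

theory Submission
  imports Defs
begin

text \<open>
  A 1-block is exactly a connected component of the successor and predecessor functions: every
  element of the block of x is an iterate of s or of p at x. Consequently the substructure of
  (L,<,s,p) generated by a finite set X is the union of the blocks of X, a map that commutes with
  s and p sends blocks onto blocks, and conversely every order isomorphism between two blocks
  commutes with s and p. So an isomorphism between finitely generated substructures is the same
  thing as an isomorphism between finite sets of points of \<Phi>(L) together with order isomorphisms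
  between corresponding blocks. Since each block is finite, \<omega>, \<omega>* or \<zeta>, blocks of the same colour
  are isomorphic, and the block isomorphisms can always be chosen; homogeneity therefore transfers
  in both directions.
\<close>

definition order_iso_betw ::
    "('a \<Rightarrow> 'b) \<Rightarrow> 'a set \<Rightarrow> ('a \<Rightarrow> 'a \<Rightarrow> bool) \<Rightarrow> 'b set \<Rightarrow> ('b \<Rightarrow> 'b \<Rightarrow> bool) \<Rightarrow> bool" where
  "order_iso_betw f B r S r' \<longleftrightarrow> bij_betw f B S \<and> (\<forall>x\<in>B. \<forall>y\<in>B. r x y \<longleftrightarrow> r' (f x) (f y))"

lemma order_iso_to_iff: "order_iso_to B r S r' \<longleftrightarrow> (\<exists>f. order_iso_betw f B r S r')"
  unfolding order_iso_to_def order_iso_betw_def by blast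

lemma order_iso_betw_inv:
  assumes "order_iso_betw f B r S r'"
  shows "order_iso_betw (inv_into B f) S r' B r"
proof -
  have bij: "bij_betw f B S" and ord: "\<forall>x\<in>B. \<forall>y\<in>B. r x y \<longleftrightarrow> r' (f x) (f y)"
    using assms unfolding order_iso_betw_def by auto
  have inv: "inv_into B f u \<in> B" "f (inv_into B f u) = u" if "u \<in> S" for u
    using bij that by (auto simp: bij_betw_def inv_into_into f_inv_into_f)
  have "r' u v \<longleftrightarrow> r (inv_into B f u) (inv_into B f v)" if "u \<in> S" "v \<in> S" for u v
    using ord inv[OF that(1)] inv[OF that(2)] by metis
  then show ?thesis
    using bij_betw_inv_into[OF bij] unfolding order_iso_betw_def by blast
qed

lemma order_iso_betw_comp:
  assumes "order_iso_betw f B r S r'" "order_iso_betw g S r' T r''"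
  shows "order_iso_betw (g \<circ> f) B r T r''"
proof -
  have "f ` B = S"
    using assms(1) unfolding order_iso_betw_def bij_betw_def by blast
  moreover have "bij_betw (g \<circ> f) B T"
    using assms bij_betw_trans unfolding order_iso_betw_def by blast
  moreover have "r x y \<longleftrightarrow> r'' (g (f x)) (g (f y))" if "x \<in> B" "y \<in> B" for x y
  proof -
    have "f x \<in> S" "f y \<in> S"
      using that \<open>f ` B = S\<close> by auto
    then show ?thesis
      using assms that unfolding order_iso_betw_def by blast
  qed
  ultimately show ?thesis
    unfolding order_iso_betw_def by simp
qed

lemma order_iso_to_sym: "order_iso_to B r S r' \<Longrightarrow> order_iso_to S r' B r"
  unfolding order_iso_to_iff using order_iso_betw_inv by blast

lemma order_iso_to_trans:
  "order_iso_to B r S r' \<Longrightarrow> order_iso_to S r' T r'' \<Longrightarrow> order_iso_to B r T r''"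
  unfolding order_iso_to_iff using order_iso_betw_comp by blast

lemma order_iso_to_left_iff:
  assumes "order_iso_to B r D r'"
  shows "order_iso_to B r S s \<longleftrightarrow> order_iso_to D r' S s"
  using order_iso_to_trans[OF assms] order_iso_to_trans[OF order_iso_to_sym[OF assms]] by blast

lemma order_iso_betw_cong:
  "order_iso_betw g B r S r' \<Longrightarrow> (\<And>x. x \<in> B \<Longrightarrow> f x = g x) \<Longrightarrow> order_iso_betw f B r S r'"
  unfolding order_iso_betw_def using bij_betw_cong[of B f g S] by simp

lemma order_iso_betw_converse:
  "order_iso_betw f B r S r' \<Longrightarrow> order_iso_betw f B (\<lambda>x y. r y x) S (\<lambda>x y. r' y x)"
  unfolding order_iso_betw_def by blast

lemma order_iso_betw_restrict:
  assumes "inj_on f S" "\<forall>x\<in>S. \<forall>y\<in>S. r x y \<longleftrightarrow> r' (f x) (f y)" "B \<subseteq> S"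
  shows "order_iso_betw f B r (f ` B) r'"
  unfolding order_iso_betw_def bij_betw_def using assms inj_on_subset by blast

lemma order_iso_betw_is_succ:
  assumes "order_iso_betw g B r D r'" "x \<in> B" "y \<in> B"
  shows "is_succ B r x y \<longleftrightarrow> is_succ D r' (g x) (g y)"
proof -
  have "g ` B = D" and ord: "\<forall>x\<in>B. \<forall>y\<in>B. r x y \<longleftrightarrow> r' (g x) (g y)"
    using assms(1) unfolding order_iso_betw_def bij_betw_def by auto
  then show ?thesis
    using assms(2,3) unfolding is_succ_def by auto
qed

lemma inj_on_if_order_iff:
  assumes "strict_linear_on S r" "\<forall>x\<in>S. \<not> r' (f x) (f x)"
    "\<forall>x\<in>S. \<forall>y\<in>S. r x y \<longleftrightarrow> r' (f x) (f y)"
  shows "inj_on f S"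
  using assms unfolding strict_linear_on_def inj_on_def by metis

lemma strict_mono_order_iso_betw:
  fixes T :: "'b::linorder set"
  assumes "strict_linear_on S r" "f ` T = S" "\<forall>a\<in>T. \<forall>b\<in>T. a < b \<longrightarrow> r (f a) (f b)"
  shows "order_iso_betw f T (<) S r"
proof -
  have "a < b" if "a \<in> T" "b \<in> T" "r (f a) (f b)" for a b
  proof (rule ccontr)
    assume "\<not> a < b"
    then have "b < a \<or> b = a"
      by auto
    moreover have "f a \<in> S" "f b \<in> S"
      using assms(2) that by auto
    ultimately show False
      using assms(1,3) that unfolding strict_linear_on_def by metis
  qed
  then have ord: "\<forall>a\<in>T. \<forall>b\<in>T. a < b \<longleftrightarrow> r (f a) (f b)"
    using assms(3) by blast
  moreover have "strict_linear_on T (<)"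
    unfolding strict_linear_on_def by auto
  ultimately have "inj_on f T"
    using inj_on_if_order_iff by blast
  then show ?thesis
    using ord assms(2) unfolding order_iso_betw_def bij_betw_def by blast
qed

lemma finite_order_iso_to_atLeastLessThan:
  assumes "strict_linear_on S r" "finite S"
  shows "order_iso_to S r {0..<card S} (<)"
proof -
  define rank where "rank x = card {z\<in>S. r z x}" for x
  have mono: "rank x < rank y" if "x \<in> S" "y \<in> S" "r x y" for x y
  proof -
    have "{z\<in>S. r z x} \<subset> {z\<in>S. r z y}"
      using assms(1) that unfolding strict_linear_on_def by blast
    then show ?thesis
      unfolding rank_def using assms(2) by (simp add: psubset_card_mono)
  qed
  have ord: "\<forall>x\<in>S. \<forall>y\<in>S. r x y \<longleftrightarrow> rank x < rank y"
    using mono assms(1) unfolding strict_linear_on_def by (metis less_asym less_irrefl)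
  then have inj: "inj_on rank S"
    using inj_on_if_order_iff[OF assms(1)] by blast
  have "rank ` S \<subseteq> {0..<card S}"
  proof
    fix j assume "j \<in> rank ` S"
    then obtain x where "x \<in> S" "j = rank x" by blast
    moreover have "{z\<in>S. r z x} \<subset> S"
      using \<open>x \<in> S\<close> assms(1) unfolding strict_linear_on_def by blast
    ultimately show "j \<in> {0..<card S}"
      unfolding rank_def using assms(2) by (simp add: psubset_card_mono)
  qed
  then have "rank ` S = {0..<card S}"
    using card_image[OF inj] by (simp add: card_subset_eq)
  then show ?thesis
    using inj ord unfolding order_iso_to_iff order_iso_betw_def bij_betw_def by blast
qed

text \<open>The following converse lemmas must be used instantiated, e.g. \<open>block_converse[of A lt]\<close>:
  as simplification rules they loop, because \<open>\<lambda>x y. lt y x\<close> matches every relation.\<close>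

lemma betw_converse: "betw A (\<lambda>x y. lt y x) = betw A lt"
  by (intro ext) (auto simp: betw_def)

lemma block_converse: "block A (\<lambda>x y. lt y x) = block A lt"
  by (intro ext) (simp add: block_def sim1_def betw_converse[of A lt])

lemma Phi_carrier_converse: "Phi_carrier A (\<lambda>x y. lt y x) = Phi_carrier A lt"
  by (simp add: Phi_carrier_def block_converse[of A lt])

lemma succ_fn_converse: "succ_fn A (\<lambda>x y. lt y x) = pred_fn A lt"
proof -
  have "is_succ A (\<lambda>x y. lt y x) x = is_pred A lt x" for x
    by (intro ext) (auto simp: is_succ_def is_pred_def)
  then show ?thesis
    by (intro ext) (simp add: succ_fn_def pred_fn_def)
qed

lemma Phi_col_order_iso_invariant:
  assumes "order_iso_betw g B lt D lt"
  shows "Phi_col A lt B c = Phi_col A lt D c"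
proof -
  have "order_iso_to B lt D lt"
    using assms order_iso_to_iff by blast
  note iso = order_iso_to_left_iff[OF this]
  have "bij_betw g B D"
    using assms unfolding order_iso_betw_def by blast
  then show ?thesis
    by (cases c) (simp_all add: iso bij_betw_finite bij_betw_same_card)
qed

definition sp_iso :: "'a set \<Rightarrow> ('a \<Rightarrow> 'a \<Rightarrow> bool) \<Rightarrow> ('a \<Rightarrow> 'a) \<Rightarrow> 'a set \<Rightarrow> 'a set \<Rightarrow> bool" where
  "sp_iso A lt f U V \<longleftrightarrow> order_iso_betw f U lt V lt \<and>
     (\<forall>x\<in>U. f (succ_fn A lt x) = succ_fn A lt (f x) \<and> f (pred_fn A lt x) = pred_fn A lt (f x))"

definition col_iso :: "('b \<Rightarrow> 'b \<Rightarrow> bool) \<Rightarrow> ('b \<Rightarrow> 'c \<Rightarrow> bool) \<Rightarrow> ('b \<Rightarrow> 'b) \<Rightarrow> 'b set \<Rightarrow> 'b set \<Rightarrow> bool" where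
  "col_iso R Q h X Y \<longleftrightarrow> order_iso_betw h X R Y R \<and> (\<forall>x\<in>X. \<forall>c. Q x c \<longleftrightarrow> Q (h x) c)"

lemma homogeneous_sp_iff:
  "homogeneous_sp A lt \<longleftrightarrow>
    (\<forall>X Y f. finite X \<and> X \<subseteq> A \<and> finite Y \<and> Y \<subseteq> A \<and>
       sp_iso A lt f (gen_sp A lt X) (gen_sp A lt Y) \<longrightarrow>
       (\<exists>g. sp_iso A lt g A A \<and> (\<forall>x\<in>gen_sp A lt X. g x = f x)))"
  unfolding homogeneous_sp_def sp_iso_def order_iso_betw_def by (simp add: conj_assoc)

lemma homogeneous_col_iff:
  "homogeneous_col D R Q \<longleftrightarrow>
    (\<forall>X Y f. finite X \<and> X \<subseteq> D \<and> Y \<subseteq> D \<and> col_iso R Q f X Y \<longrightarrow>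
       (\<exists>g. col_iso R Q g D D \<and> (\<forall>x\<in>X. g x = f x)))"
  unfolding homogeneous_col_def col_iso_def order_iso_betw_def by (simp add: conj_assoc)

lemma funpow_closed: "\<forall>z\<in>S. f z \<in> S \<Longrightarrow> x \<in> S \<Longrightarrow> (f ^^ n) x \<in> S"
  by (induction n) auto

lemma Phi_less_image:
  assumes "inj_on f U" "\<forall>x\<in>U. \<forall>y\<in>U. lt x y \<longleftrightarrow> lt (f x) (f y)" "B \<subseteq> U" "D \<subseteq> U"
  shows "Phi_less A lt (f ` B) (f ` D) \<longleftrightarrow> Phi_less A lt B D"
proof -
  have "f ` B = f ` D \<longleftrightarrow> B = D"
    using assms(1,3,4) by (rule inj_on_image_eq_iff)
  moreover have "(\<exists>x\<in>f ` B. \<exists>y\<in>f ` D. lt x y) \<longleftrightarrow> (\<exists>x\<in>B. \<exists>y\<in>D. lt x y)"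
    using assms(2-4) by blast
  ultimately show ?thesis
    unfolding Phi_less_def by blast
qed

locale linear_ordering =
  fixes A :: "'a set" and lt :: "'a \<Rightarrow> 'a \<Rightarrow> bool"
  assumes strict_linear: "strict_linear_on A lt"
begin

abbreviation "blk \<equiv> block A lt"
abbreviation "sc \<equiv> succ_fn A lt"
abbreviation "pc \<equiv> pred_fn A lt"

lemma lt_irrefl: "x \<in> A \<Longrightarrow> \<not> lt x x"
  using strict_linear unfolding strict_linear_on_def by blast

lemma lt_trans: "x \<in> A \<Longrightarrow> y \<in> A \<Longrightarrow> z \<in> A \<Longrightarrow> lt x y \<Longrightarrow> lt y z \<Longrightarrow> lt x z"
  using strict_linear unfolding strict_linear_on_def by blast

lemma lt_total: "x \<in> A \<Longrightarrow> y \<in> A \<Longrightarrow> x \<noteq> y \<Longrightarrow> lt x y \<or> lt y x"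
  using strict_linear unfolding strict_linear_on_def by blast

lemma lt_asym: "x \<in> A \<Longrightarrow> y \<in> A \<Longrightarrow> lt x y \<Longrightarrow> \<not> lt y x"
  using lt_irrefl lt_trans by blast

lemma strict_linear_subset: "S \<subseteq> A \<Longrightarrow> strict_linear_on S lt"
  using strict_linear unfolding strict_linear_on_def by blast

lemma converse_linear_ordering: "linear_ordering A (\<lambda>x y. lt y x)"
  using strict_linear unfolding linear_ordering_def strict_linear_on_def by blast

lemma betw_subset:
  assumes "y \<in> A"
  shows "betw A lt x z \<subseteq> insert y (betw A lt x y \<union> betw A lt y z)"
  using assms lt_total unfolding betw_def by blast

lemma sim1_trans: "sim1 A lt x y \<Longrightarrow> sim1 A lt y z \<Longrightarrow> sim1 A lt x z"
  unfolding sim1_def using betw_subset finite_subset by (metis finite_Un finite_insert)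

lemma in_block: "x \<in> A \<Longrightarrow> x \<in> blk x"
proof -
  assume "x \<in> A"
  then have "betw A lt x x = {}"
    unfolding betw_def using lt_asym by blast
  then show ?thesis
    using \<open>x \<in> A\<close> by (simp add: block_def sim1_def)
qed

lemma block_subset: "blk x \<subseteq> A"
  by (auto simp: block_def sim1_def)

lemma block_memD: "y \<in> blk x \<Longrightarrow> x \<in> A"
  by (simp add: block_def sim1_def)

lemma block_eq: "y \<in> blk x \<Longrightarrow> blk y = blk x"
proof -
  assume "y \<in> blk x"
  then have "sim1 A lt y x"
    by (simp add: block_def sim1_def betw_def conj_commute disj_commute)
  with \<open>y \<in> blk x\<close> show ?thesis
    unfolding block_def using sim1_trans by blast
qed

lemma block_convex:
  assumes "u \<in> blk x" "v \<in> blk x" "w \<in> A" "lt u w" "lt w v"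
  shows "w \<in> blk x"
proof -
  have "v \<in> blk u"
    using assms(1,2) block_eq by blast
  have uA: "u \<in> A" and vA: "v \<in> A"
    using assms(1,2) block_subset by blast+
  have "betw A lt u w \<subseteq> betw A lt u v"
    unfolding betw_def using assms(3-5) uA vA lt_trans by blast
  then have "finite (betw A lt u w)"
    using \<open>v \<in> blk u\<close> finite_subset by (auto simp: block_def sim1_def)
  then have "w \<in> blk u"
    using uA assms(3) by (simp add: block_def sim1_def)
  then show ?thesis
    using assms(1) block_eq by blast
qed

lemma Phi_carrier_block: "B \<in> Phi_carrier A lt \<Longrightarrow> x \<in> B \<Longrightarrow> B = blk x"
  unfolding Phi_carrier_def using block_eq by blast

lemma Phi_carrier_subset: "B \<in> Phi_carrier A lt \<Longrightarrow> B \<subseteq> A"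
  unfolding Phi_carrier_def using block_subset by blast

lemma Union_Phi_carrier: "\<Union> (Phi_carrier A lt) = A"
  unfolding Phi_carrier_def using block_subset in_block by blast

lemma Phi_less_iff:
  assumes B: "B \<in> Phi_carrier A lt" and D: "D \<in> Phi_carrier A lt" and "B \<noteq> D" "x \<in> B" "y \<in> D"
  shows "Phi_less A lt B D \<longleftrightarrow> lt x y"
proof
  assume "Phi_less A lt B D"
  then obtain u v where uv: "u \<in> B" "v \<in> D" "lt u v"
    unfolding Phi_less_def by blast
  have Bx: "B = blk x" and Dy: "D = blk y"
    using assms Phi_carrier_block by auto
  have A: "x \<in> A" "y \<in> A" "u \<in> A" "v \<in> A"
    using assms uv Phi_carrier_subset by auto
  have disjoint: "z \<notin> D" if "z \<in> B" for z
    using that Phi_carrier_block[OF B] Phi_carrier_block[OF D] \<open>B \<noteq> D\<close> by metis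
  show "lt x y"
  proof (rule ccontr)
    assume "\<not> lt x y"
    moreover have "x \<noteq> y"
      using disjoint assms(4,5) by blast
    ultimately have "lt y x"
      using lt_total A by blast
    consider "u = y" | "lt u y" | "lt y u"
      using lt_total A by blast
    then show False
    proof cases
      case 1
      then show False
        using disjoint uv(1) assms(5) by blast
    next
      case 2
      then have "y \<in> B"
        using block_convex[OF uv(1)[unfolded Bx] in_block[OF A(1)] A(2) 2 \<open>lt y x\<close>] Bx by blast
      then show False
        using disjoint assms(5) by blast
    next
      case 3
      then have "u \<in> D"
        using block_convex[OF in_block[OF A(2)] uv(2)[unfolded Dy] A(3) 3 uv(3)] Dy by blast
      then show False
        using disjoint uv(1) by blast
    qed
  qed
next
  assume "lt x y"
  then show "Phi_less A lt B D"
    using assms(3-5) unfolding Phi_less_def by blast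
qed

lemma succ_fn_eq: "is_succ A lt x y \<Longrightarrow> sc x = y"
proof -
  assume "is_succ A lt x y"
  moreover have "y' = y" if "is_succ A lt x y'" for y'
    using that \<open>is_succ A lt x y\<close> lt_total unfolding is_succ_def by blast
  ultimately show ?thesis
    unfolding succ_fn_def by (metis the_equality)
qed

lemma succ_fn_eq_self: "\<nexists>y. is_succ A lt x y \<Longrightarrow> sc x = x"
  unfolding succ_fn_def by auto

lemma betw_eq: "x \<in> A \<Longrightarrow> y \<in> A \<Longrightarrow> lt x y \<Longrightarrow> betw A lt x y = {z\<in>A. lt x z \<and> lt z y}"
  unfolding betw_def using lt_trans lt_asym by blast

lemma is_succ_if_least_between:
  assumes "x \<in> A" "y \<in> A" "lt x y" "m \<in> betw A lt x y"
    and least: "\<forall>z\<in>betw A lt x y. z \<noteq> m \<longrightarrow> lt m z"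
  shows "is_succ A lt x m"
proof -
  have betw: "betw A lt x y = {z\<in>A. lt x z \<and> lt z y}"
    using betw_eq[OF assms(1-3)] .
  then have m: "m \<in> A" "lt x m" "lt m y"
    using assms(4) by auto
  have "\<not> (lt x z \<and> lt z m)" if "z \<in> A" for z
  proof
    assume z: "lt x z \<and> lt z m"
    then have "z \<in> betw A lt x y"
      using lt_trans[OF that m(1) assms(2)] m(3) that unfolding betw by blast
    moreover have "z \<noteq> m"
      using z lt_irrefl[OF m(1)] by blast
    ultimately have "lt m z"
      using least by blast
    then show False
      using z lt_asym[OF m(1) that] by blast
  qed
  then show ?thesis
    using m unfolding is_succ_def by blast
qed

lemma is_succ_in_block:
  assumes "x \<in> A" "is_succ A lt x y"
  shows "y \<in> blk x"
proof -
  have "y \<in> A" "lt x y"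
    using assms(2) unfolding is_succ_def by auto
  then have "betw A lt x y = {}"
    using assms(2) betw_eq[OF assms(1)] unfolding is_succ_def by blast
  then show ?thesis
    using assms(1) \<open>y \<in> A\<close> by (simp add: block_def sim1_def)
qed

lemma succ_in_block: "x \<in> A \<Longrightarrow> sc x \<in> blk x"
  using is_succ_in_block succ_fn_eq succ_fn_eq_self in_block by metis

lemma pred_in_block: "x \<in> A \<Longrightarrow> pc x \<in> blk x"
  using linear_ordering.succ_in_block[OF converse_linear_ordering]
  by (simp add: block_converse[of A lt] succ_fn_converse[of A lt])

lemma iterates_in_block:
  assumes "x \<in> A"
  shows "(sc ^^ n) x \<in> blk x" "(pc ^^ n) x \<in> blk x"
proof (induction n)
  case (Suc n)
  have "(sc ^^ n) x \<in> A" "(pc ^^ n) x \<in> A"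
    using Suc block_subset by blast+
  then have "sc ((sc ^^ n) x) \<in> blk ((sc ^^ n) x)" "pc ((pc ^^ n) x) \<in> blk ((pc ^^ n) x)"
    using succ_in_block pred_in_block by blast+
  then show "(sc ^^ Suc n) x \<in> blk x" "(pc ^^ Suc n) x \<in> blk x"
    using Suc block_eq by auto
qed (use assms in_block in auto)

lemma finite_has_least:
  assumes "finite F" "F \<noteq> {}" "F \<subseteq> A"
  shows "\<exists>m\<in>F. \<forall>y\<in>F. y \<noteq> m \<longrightarrow> lt m y"
  using assms
proof (induction F rule: finite_ne_induct)
  case (insert x F)
  then obtain m where m: "m \<in> F" "\<forall>y\<in>F. y \<noteq> m \<longrightarrow> lt m y"
    by auto
  have "x \<in> A" "m \<in> A" "x \<noteq> m"
    using insert m(1) by auto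
  then consider "lt x m" | "lt m x"
    using lt_total by blast
  then show ?case
  proof cases
    case 1
    have "lt x y" if "y \<in> F" for y
    proof (cases "y = m")
      case False
      then have "lt m y"
        using m that by blast
      moreover have "y \<in> A"
        using that insert.prems by blast
      ultimately show ?thesis
        using lt_trans[OF \<open>x \<in> A\<close> \<open>m \<in> A\<close>] 1 by blast
    qed (use 1 in simp)
    then show ?thesis
      by blast
  next
    case 2
    then show ?thesis
      using m by blast
  qed
qed simp

lemma succ_iterates_reach:
  "y \<in> blk x \<Longrightarrow> lt x y \<Longrightarrow> \<exists>n. y = (sc ^^ n) x"
proof (induction "card (betw A lt x y)" arbitrary: x rule: less_induct)
  case less
  have A: "x \<in> A" "y \<in> A"
    using less.prems block_subset block_memD by blast+
  have betw: "betw A lt x y = {z\<in>A. lt x z \<and> lt z y}"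
    using betw_eq[OF A less.prems(2)] .
  have fin: "finite (betw A lt x y)"
    using less.prems(1) by (simp add: block_def sim1_def)
  show ?case
  proof (cases "betw A lt x y = {}")
    case True
    then have "is_succ A lt x y"
      using A less.prems(2) unfolding is_succ_def betw by blast
    then have "y = (sc ^^ 1) x"
      using succ_fn_eq by simp
    then show ?thesis ..
  next
    case False
    then obtain m where m_betw: "m \<in> betw A lt x y"
      and least: "\<forall>z\<in>betw A lt x y. z \<noteq> m \<longrightarrow> lt m z"
      using finite_has_least[OF fin] unfolding betw by blast
    then have m: "m \<in> A" "lt x m" "lt m y"
      unfolding betw by auto
    have "sc x = m"
      using succ_fn_eq is_succ_if_least_between[OF A less.prems(2) m_betw least] by blast
    have "y \<in> blk m"
      using block_convex[OF in_block[OF A(1)] less.prems(1) m] less.prems(1) block_eq by blast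
    moreover have "betw A lt m y \<subset> betw A lt x y"
      using m betw_eq[OF m(1) A(2) m(3)] lt_trans[OF A(1) m(1)] lt_irrefl[OF m(1)] unfolding betw
      by blast
    then have "card (betw A lt m y) < card (betw A lt x y)"
      using fin by (rule psubset_card_mono[rotated])
    ultimately obtain n where "y = (sc ^^ n) m"
      using less.hyps m(3) by blast
    then have "y = (sc ^^ Suc n) x"
      using \<open>sc x = m\<close> by (simp only: funpow_Suc_right comp_def)
    then show ?thesis ..
  qed
qed

lemma pred_iterates_reach: "y \<in> blk x \<Longrightarrow> lt y x \<Longrightarrow> \<exists>n. y = (pc ^^ n) x"
  using linear_ordering.succ_iterates_reach[OF converse_linear_ordering]
  by (simp add: block_converse[of A lt] succ_fn_converse[of A lt])

lemma block_iterates: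
  assumes "x \<in> A"
  shows "blk x = range (\<lambda>n. (sc ^^ n) x) \<union> range (\<lambda>n. (pc ^^ n) x)"
proof
  show "blk x \<subseteq> range (\<lambda>n. (sc ^^ n) x) \<union> range (\<lambda>n. (pc ^^ n) x)"
  proof
    fix y assume y: "y \<in> blk x"
    then consider "y = (sc ^^ 0) x" | "lt x y" | "lt y x"
      using lt_total assms block_subset by fastforce
    then show "y \<in> range (\<lambda>n. (sc ^^ n) x) \<union> range (\<lambda>n. (pc ^^ n) x)"
      by cases (use y succ_iterates_reach pred_iterates_reach in blast)+
  qed
qed (use iterates_in_block[OF assms] in blast)

lemma block_subset_if_closed:
  assumes "\<forall>z\<in>S. sc z \<in> S \<and> pc z \<in> S" "x \<in> S" "x \<in> A"
  shows "blk x \<subseteq> S"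
proof -
  have "\<forall>z\<in>S. sc z \<in> S" "\<forall>z\<in>S. pc z \<in> S"
    using assms(1) by blast+
  then have "(sc ^^ n) x \<in> S" "(pc ^^ n) x \<in> S" for n
    using funpow_closed[OF _ assms(2)] by auto
  then show ?thesis
    unfolding block_iterates[OF assms(3)] by blast
qed

lemma Union_blocks_closed: "\<forall>z\<in>\<Union> (blk ` X). sc z \<in> \<Union> (blk ` X) \<and> pc z \<in> \<Union> (blk ` X)"
proof
  fix z
  assume "z \<in> \<Union> (blk ` X)"
  then obtain x where x: "x \<in> X" "z \<in> blk x"
    by blast
  then have "z \<in> A"
    using block_subset by blast
  then have "sc z \<in> blk x" "pc z \<in> blk x"
    using succ_in_block pred_in_block block_eq[OF x(2)] by blast+
  then show "sc z \<in> \<Union> (blk ` X) \<and> pc z \<in> \<Union> (blk ` X)"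
    using x(1) by blast
qed

lemma gen_sp_eq_Union_blocks:
  assumes "X \<subseteq> A"
  shows "gen_sp A lt X = \<Union> (blk ` X)"
proof
  have "X \<subseteq> \<Union> (blk ` X)"
    using assms in_block by blast
  moreover have "\<Union> (blk ` X) \<subseteq> A"
    using block_subset by blast
  moreover note Union_blocks_closed[of X]
  ultimately show "gen_sp A lt X \<subseteq> \<Union> (blk ` X)"
    unfolding gen_sp_def by (intro Inter_lower CollectI conjI)
  show "\<Union> (blk ` X) \<subseteq> gen_sp A lt X"
    unfolding gen_sp_def
  proof (rule Inter_greatest)
    fix S
    assume "S \<in> {S. X \<subseteq> S \<and> S \<subseteq> A \<and> (\<forall>x\<in>S. sc x \<in> S \<and> pc x \<in> S)}"
    then have "X \<subseteq> S" "\<forall>z\<in>S. sc z \<in> S \<and> pc z \<in> S"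
      by auto
    then show "\<Union> (blk ` X) \<subseteq> S"
      using assms by (intro UN_least block_subset_if_closed) auto
  qed
qed

lemma image_block_eq:
  assumes closed: "\<forall>z\<in>U. sc z \<in> U \<and> pc z \<in> U"
    and comm: "\<forall>z\<in>U. f (sc z) = sc (f z) \<and> f (pc z) = pc (f z)"
    and "x \<in> U" "x \<in> A" "f x \<in> A"
  shows "f ` blk x = blk (f x)"
proof -
  have "f ((sc ^^ n) x) = (sc ^^ n) (f x) \<and> f ((pc ^^ n) x) = (pc ^^ n) (f x)" for n
  proof (induction n)
    case (Suc n)
    have "\<forall>z\<in>U. sc z \<in> U" "\<forall>z\<in>U. pc z \<in> U"
      using closed by blast+
    then have "(sc ^^ n) x \<in> U" "(pc ^^ n) x \<in> U"
      using funpow_closed[OF _ \<open>x \<in> U\<close>] by auto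
    then show ?case
      using Suc comm by simp
  qed simp
  then show ?thesis
    using block_iterates[OF \<open>x \<in> A\<close>] block_iterates[OF \<open>f x \<in> A\<close>] by (simp add: image_Un image_image)
qed

lemma is_succ_block_iff:
  assumes "z \<in> blk x"
  shows "is_succ A lt z y \<longleftrightarrow> y \<in> blk x \<and> is_succ (blk x) lt z y"
proof
  assume "is_succ A lt z y"
  moreover have "z \<in> A"
    using assms block_subset by blast
  ultimately have "y \<in> blk x"
    using is_succ_in_block block_eq[OF assms] by blast
  then show "y \<in> blk x \<and> is_succ (blk x) lt z y"
    using \<open>is_succ A lt z y\<close> block_subset unfolding is_succ_def by blast
next
  assume y: "y \<in> blk x \<and> is_succ (blk x) lt z y"
  then have "w \<in> blk x" if "w \<in> A" "lt z w" "lt w y" for w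
    using block_convex[OF assms] that by blast
  then show "is_succ A lt z y"
    using y block_subset unfolding is_succ_def by blast
qed

text \<open>The successor of z, if it exists, lies in the block of z, and inside a block it is
  determined by the order alone.\<close>

lemma block_iso_is_succ_iff:
  assumes B: "B \<in> Phi_carrier A lt" and D: "D \<in> Phi_carrier A lt"
    and g: "order_iso_betw g B lt D lt" and "z \<in> B" "y \<in> B"
  shows "is_succ A lt z y \<longleftrightarrow> is_succ A lt (g z) (g y)"
proof -
  have gz: "g z \<in> D" and "g y \<in> D"
    using g assms(4,5) unfolding order_iso_betw_def bij_betw_def by auto
  have Bz: "B = blk z" and Dgz: "D = blk (g z)"
    using Phi_carrier_block[OF B \<open>z \<in> B\<close>] Phi_carrier_block[OF D gz] .
  have "is_succ A lt z y \<longleftrightarrow> is_succ B lt z y"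
    using is_succ_block_iff[OF \<open>z \<in> B\<close>[unfolded Bz]] \<open>y \<in> B\<close> Bz by simp
  also have "\<dots> \<longleftrightarrow> is_succ D lt (g z) (g y)"
    by (rule order_iso_betw_is_succ[OF g assms(4,5)])
  also have "\<dots> \<longleftrightarrow> is_succ A lt (g z) (g y)"
    using is_succ_block_iff[OF gz[unfolded Dgz]] \<open>g y \<in> D\<close> Dgz by simp
  finally show ?thesis .
qed

lemma block_iso_commutes_succ:
  assumes B: "B \<in> Phi_carrier A lt" and D: "D \<in> Phi_carrier A lt"
    and g: "order_iso_betw g B lt D lt" and "z \<in> B"
  shows "g (sc z) = sc (g z)"
proof -
  have onto: "g ` B = D"
    using g unfolding order_iso_betw_def bij_betw_def by auto
  have succ_in_B: "y \<in> B" if "is_succ A lt z y" for y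
    using is_succ_in_block[OF _ that] Phi_carrier_block[OF B \<open>z \<in> B\<close>] Phi_carrier_subset[OF B]
      \<open>z \<in> B\<close> by blast
  have succ_in_D: "w \<in> D" if "is_succ A lt (g z) w" for w
    using is_succ_in_block[OF _ that] Phi_carrier_block[OF D] Phi_carrier_subset[OF D] onto
      \<open>z \<in> B\<close> by blast
  show ?thesis
  proof (cases "\<exists>y. is_succ A lt z y")
    case True
    then obtain y where "is_succ A lt z y"
      by blast
    then show ?thesis
      using succ_in_B block_iso_is_succ_iff[OF B D g \<open>z \<in> B\<close>] succ_fn_eq by metis
  next
    case False
    then have "\<nexists>w. is_succ A lt (g z) w"
      using succ_in_D onto block_iso_is_succ_iff[OF B D g \<open>z \<in> B\<close>] by blast
    then show ?thesis
      using False succ_fn_eq_self by metis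
  qed
qed

lemma block_iso_commutes_pred:
  assumes "B \<in> Phi_carrier A lt" "D \<in> Phi_carrier A lt" "order_iso_betw g B lt D lt" "z \<in> B"
  shows "g (pc z) = pc (g z)"
  using linear_ordering.block_iso_commutes_succ[OF converse_linear_ordering _ _ order_iso_betw_converse[OF assms(3)]]
    assms(1,2,4)
  by (simp add: Phi_carrier_converse[of A lt] succ_fn_converse[of A lt])

lemma lt_succ_if_above:
  assumes "y \<in> blk x" "lt x y"
  shows "lt x (sc x)"
proof (cases "\<exists>z. is_succ A lt x z")
  case True
  then obtain z where "is_succ A lt x z"
    by blast
  then show ?thesis
    using succ_fn_eq[of x z] unfolding is_succ_def by simp
next
  case False
  obtain n where n: "y = (sc ^^ n) x"
    using succ_iterates_reach assms by blast
  have "sc x = x"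
    using False by (rule succ_fn_eq_self)
  have "(sc ^^ k) x = x" for k
  proof (induction k)
    case (Suc k)
    then show ?case
      using \<open>sc x = x\<close> by simp
  qed simp
  then show ?thesis
    using n assms(2) lt_irrefl[OF block_memD[OF assms(1)]] by simp
qed

lemma succ_iterates_strict_mono:
  assumes "x \<in> A" and unbounded: "\<forall>y\<in>blk x. \<exists>z\<in>blk x. lt y z" and "n < m"
  shows "lt ((sc ^^ n) x) ((sc ^^ m) x)"
proof -
  have step: "lt ((sc ^^ k) x) ((sc ^^ Suc k) x)" for k
  proof -
    have y: "(sc ^^ k) x \<in> blk x"
      using iterates_in_block(1)[OF assms(1)] .
    then obtain z where "z \<in> blk x" "lt ((sc ^^ k) x) z"
      using unbounded by blast
    then show ?thesis
      using lt_succ_if_above block_eq[OF y] by simp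
  qed
  have A: "(sc ^^ k) x \<in> A" for k
    using iterates_in_block(1)[OF assms(1)] block_subset by blast
  have "lt ((sc ^^ n) x) ((sc ^^ Suc (n + d)) x)" for d
  proof (induction d)
    case 0
    show ?case
      using step[of n] by (simp only: add_0_right)
  next
    case (Suc d)
    show ?case
      unfolding add_Suc_right by (rule lt_trans[OF A A A Suc.IH step])
  qed
  moreover obtain d where "m = Suc (n + d)"
    using \<open>n < m\<close> less_imp_Suc_add by blast
  ultimately show ?thesis
    by blast
qed

lemma pred_iterates_strict_antimono:
  assumes "x \<in> A" "\<forall>y\<in>blk x. \<exists>z\<in>blk x. lt z y" "n < m"
  shows "lt ((pc ^^ m) x) ((pc ^^ n) x)"
  using linear_ordering.succ_iterates_strict_mono[OF converse_linear_ordering] assms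
  by (simp add: block_converse[of A lt] succ_fn_converse[of A lt])

lemma block_order_iso_nat:
  assumes "x \<in> A" "\<forall>y\<in>blk x. \<not> lt y x" "\<forall>y\<in>blk x. \<exists>z\<in>blk x. lt y z"
  shows "order_iso_betw (\<lambda>n. (sc ^^ n) x) UNIV (<) (blk x) lt"
proof (rule strict_mono_order_iso_betw[OF strict_linear_subset[OF block_subset]])
  show "range (\<lambda>n. (sc ^^ n) x) = blk x"
  proof
    show "blk x \<subseteq> range (\<lambda>n. (sc ^^ n) x)"
    proof
      fix y
      assume y: "y \<in> blk x"
      then consider "y = (sc ^^ 0) x" | "lt x y"
        using assms(1,2) lt_total block_subset by fastforce
      then show "y \<in> range (\<lambda>n. (sc ^^ n) x)"
        by cases (use succ_iterates_reach[OF y] in blast)+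
    qed
  qed (use iterates_in_block(1)[OF assms(1)] in blast)
qed (use succ_iterates_strict_mono[OF assms(1,3)] in blast)

lemma block_order_iso_nat_converse:
  assumes "x \<in> A" "\<forall>y\<in>blk x. \<not> lt x y" "\<forall>y\<in>blk x. \<exists>z\<in>blk x. lt z y"
  shows "order_iso_betw (\<lambda>n. (pc ^^ n) x) UNIV (>) (blk x) lt"
  using order_iso_betw_converse[OF linear_ordering.block_order_iso_nat[OF converse_linear_ordering]] assms
  by (simp add: block_converse[of A lt] succ_fn_converse[of A lt])

definition int_iterate :: "'a \<Rightarrow> int \<Rightarrow> 'a" where
  "int_iterate x k = (if 0 \<le> k then (sc ^^ nat k) x else (pc ^^ nat (- k)) x)"

lemma range_int_iterate:
  assumes "x \<in> A"
  shows "range (int_iterate x) = blk x"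
proof -
  have sc_eq: "(sc ^^ n) x = int_iterate x (int n)" for n
    by (simp add: int_iterate_def)
  have pc_eq: "(pc ^^ n) x = int_iterate x (- int n)" for n
  proof (cases "n = 0")
    case True
    then show ?thesis
      by (simp add: int_iterate_def)
  next
    case False
    then show ?thesis
      unfolding int_iterate_def by simp
  qed
  have "range (\<lambda>n. (sc ^^ n) x) \<union> range (\<lambda>n. (pc ^^ n) x) \<subseteq> range (int_iterate x)"
    unfolding sc_eq pc_eq by blast
  moreover have "range (int_iterate x) \<subseteq> range (\<lambda>n. (sc ^^ n) x) \<union> range (\<lambda>n. (pc ^^ n) x)"
    unfolding int_iterate_def by auto
  ultimately show ?thesis
    using block_iterates[OF assms] by blast
qed

lemma int_iterate_strict_mono:
  assumes "x \<in> A" and above: "\<forall>y\<in>blk x. \<exists>z\<in>blk x. lt y z"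
    and below: "\<forall>y\<in>blk x. \<exists>z\<in>blk x. lt z y" and "a < b"
  shows "lt (int_iterate x a) (int_iterate x b)"
proof -
  have A: "(sc ^^ n) x \<in> A" "(pc ^^ n) x \<in> A" for n
    using iterates_in_block[OF assms(1)] block_subset by blast+
  consider "0 \<le> a" | "a < 0" "0 \<le> b" | "b < 0"
    by linarith
  then show ?thesis
  proof cases
    case 1
    then show ?thesis
      using \<open>a < b\<close> succ_iterates_strict_mono[OF assms(1) above, of "nat a" "nat b"]
      by (simp add: int_iterate_def)
  next
    case 2
    then have "lt (int_iterate x a) x"
      using pred_iterates_strict_antimono[OF assms(1) below, of 0] by (simp add: int_iterate_def)
    moreover have "int_iterate x b = x \<or> lt x (int_iterate x b)"
      using 2 succ_iterates_strict_mono[OF assms(1) above, of 0 "nat b"]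
      by (cases "b = 0") (simp_all add: int_iterate_def)
    ultimately show ?thesis
      using 2 lt_trans[OF A(2) assms(1) A(1)] by (auto simp: int_iterate_def)
  next
    case 3
    then show ?thesis
      using \<open>a < b\<close> pred_iterates_strict_antimono[OF assms(1) below, of "nat (- b)" "nat (- a)"]
      by (simp add: int_iterate_def)
  qed
qed

lemma block_order_iso_int:
  assumes "x \<in> A" "\<forall>y\<in>blk x. \<exists>z\<in>blk x. lt y z" "\<forall>y\<in>blk x. \<exists>z\<in>blk x. lt z y"
  shows "order_iso_betw (int_iterate x) UNIV (<) (blk x) lt"
  using int_iterate_strict_mono[OF assms]
  by (intro strict_mono_order_iso_betw[OF strict_linear_subset[OF block_subset] range_int_iterate[OF assms(1)]])
    blast

lemma block_finite_if_bounded: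
  assumes "m \<in> blk x" "M \<in> blk x" "\<forall>y\<in>blk x. \<not> lt y m" "\<forall>y\<in>blk x. \<not> lt M y"
  shows "finite (blk x)"
proof -
  have "M \<in> blk m"
    using assms(1,2) block_eq by blast
  then have "finite (betw A lt m M)"
    by (simp add: block_def sim1_def)
  moreover have "blk x \<subseteq> {m, M} \<union> betw A lt m M"
  proof
    fix y
    assume y: "y \<in> blk x"
    then have "y \<in> A" "m \<in> A" "M \<in> A"
      using assms(1,2) block_subset by blast+
    then show "y \<in> {m, M} \<union> betw A lt m M"
      using y assms(3,4) lt_total unfolding betw_def by blast
  qed
  ultimately show ?thesis
    using finite_subset by auto
qed

lemma infinite_block_cases:
  assumes "infinite (blk x)"
  obtains (least) m where "m \<in> blk x" "\<forall>y\<in>blk x. \<not> lt y m" "\<forall>y\<in>blk x. \<exists>z\<in>blk x. lt y z"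
    | (greatest) M where "M \<in> blk x" "\<forall>y\<in>blk x. \<not> lt M y" "\<forall>y\<in>blk x. \<exists>z\<in>blk x. lt z y"
    | (unbounded) "\<forall>y\<in>blk x. \<exists>z\<in>blk x. lt y z" "\<forall>y\<in>blk x. \<exists>z\<in>blk x. lt z y"
proof (cases "\<exists>m\<in>blk x. \<forall>y\<in>blk x. \<not> lt y m")
  case True
  then obtain m where m: "m \<in> blk x" "\<forall>y\<in>blk x. \<not> lt y m"
    by blast
  have "\<forall>y\<in>blk x. \<exists>z\<in>blk x. lt y z"
  proof (rule ccontr)
    assume "\<not> (\<forall>y\<in>blk x. \<exists>z\<in>blk x. lt y z)"
    then obtain M where "M \<in> blk x" "\<forall>y\<in>blk x. \<not> lt M y"
      by blast
    then show False
      using block_finite_if_bounded[OF m(1) _ m(2)] assms by blast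
  qed
  then show ?thesis
    by (rule least[OF m])
next
  case False
  then have below: "\<forall>y\<in>blk x. \<exists>z\<in>blk x. lt z y"
    by blast
  show ?thesis
  proof (cases "\<exists>M\<in>blk x. \<forall>y\<in>blk x. \<not> lt M y")
    case True
    then obtain M where "M \<in> blk x" "\<forall>y\<in>blk x. \<not> lt M y"
      by blast
    then show ?thesis
      using greatest below by blast
  next
    case False
    then have "\<forall>y\<in>blk x. \<exists>z\<in>blk x. lt y z"
      by blast
    then show ?thesis
      using unbounded below by blast
  qed
qed

lemma block_has_colour:
  assumes "x \<in> A"
  shows "\<exists>c. Phi_col A lt (blk x) c"
proof (cases "finite (blk x)")
  case True
  then have "card (blk x) \<ge> 1"
    using in_block[OF assms] by (metis One_nat_def Suc_leI card_gt_0_iff empty_iff)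
  then have "Phi_col A lt (blk x) (C (card (blk x)))"
    using True by simp
  then show ?thesis ..
next
  case False
  have same_block: "y \<in> A" "blk y = blk x" if "y \<in> blk x" for y
    using that block_subset block_eq by blast+
  from False show ?thesis
  proof (cases rule: infinite_block_cases)
    case (least m)
    then have "order_iso_betw (\<lambda>n. (sc ^^ n) m) UNIV (<) (blk x) lt"
      using block_order_iso_nat[of m] same_block[OF least(1)] by simp
    then have "Phi_col A lt (blk x) W"
      using order_iso_to_iff order_iso_to_sym by (simp; blast)
    then show ?thesis ..
  next
    case (greatest M)
    then have "order_iso_betw (\<lambda>n. (pc ^^ n) M) UNIV (>) (blk x) lt"
      using block_order_iso_nat_converse[of M] same_block[OF greatest(1)] by simp
    then have "Phi_col A lt (blk x) SW"
      using order_iso_to_iff order_iso_to_sym by (simp; blast)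
    then show ?thesis ..
  next
    case unbounded
    then have "order_iso_betw (int_iterate x) UNIV (<) (blk x) lt"
      using block_order_iso_int[OF assms] by blast
    then have "Phi_col A lt (blk x) Z"
      using order_iso_to_iff order_iso_to_sym by (simp; blast)
    then show ?thesis ..
  qed
qed

lemma same_colour_blocks_iso:
  assumes "B \<in> Phi_carrier A lt" "D \<in> Phi_carrier A lt" "Phi_col A lt B c" "Phi_col A lt D c"
  shows "order_iso_to B lt D lt"
proof -
  have common: "order_iso_to B lt D lt" if "order_iso_to B lt S r" "order_iso_to D lt S r"
    for S :: "'b set" and r
    using order_iso_to_trans[OF that(1) order_iso_to_sym[OF that(2)]] .
  show ?thesis
  proof (cases c)
    case W
    then show ?thesis
      using assms(3,4) common by simp
  next
    case Z
    then show ?thesis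
      using assms(3,4) common by simp
  next
    case SW
    then show ?thesis
      using assms(3,4) common by simp
  next
    case (C n)
    then have "finite B" "finite D" "card B = n" "card D = n"
      using assms(3,4) by auto
    then show ?thesis
      using finite_order_iso_to_atLeastLessThan strict_linear_subset Phi_carrier_subset assms(1,2)
        common by metis
  qed
qed

lemma same_colours_iso:
  assumes "B \<in> Phi_carrier A lt" "D \<in> Phi_carrier A lt" "\<forall>c. Phi_col A lt B c \<longleftrightarrow> Phi_col A lt D c"
  shows "\<exists>g. order_iso_betw g B lt D lt"
proof -
  obtain x where "x \<in> A" "B = blk x"
    using assms(1) unfolding Phi_carrier_def by blast
  then obtain c where "Phi_col A lt B c"
    using block_has_colour by blast
  then show ?thesis
    using same_colour_blocks_iso[OF assms(1,2)] assms(3) order_iso_to_iff by blast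
qed

lemma glue_block_isos_order_iff:
  assumes P: "P \<subseteq> Phi_carrier A lt" and Q: "Q \<subseteq> Phi_carrier A lt"
    and h: "order_iso_betw h P (Phi_less A lt) Q (Phi_less A lt)"
    and g: "\<forall>B\<in>P. order_iso_betw g B lt (h B) lt"
    and "x \<in> B" "B \<in> P" "y \<in> D" "D \<in> P"
  shows "lt x y \<longleftrightarrow> lt (g x) (g y)"
proof (cases "B = D")
  case True
  then show ?thesis
    using g assms(5-8) unfolding order_iso_betw_def by blast
next
  case False
  have h_inj: "inj_on h P" and h_onto: "h ` P = Q"
    and h_less: "\<forall>B\<in>P. \<forall>D\<in>P. Phi_less A lt B D \<longleftrightarrow> Phi_less A lt (h B) (h D)"
    using h unfolding order_iso_betw_def bij_betw_def by auto
  have "g x \<in> h B" "g y \<in> h D"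
    using g assms(5-8) unfolding order_iso_betw_def bij_betw_def by blast+
  moreover have "h B \<noteq> h D"
    using h_inj False assms(6,8) unfolding inj_on_def by blast
  moreover have "B \<in> Phi_carrier A lt" "D \<in> Phi_carrier A lt"
    "h B \<in> Phi_carrier A lt" "h D \<in> Phi_carrier A lt"
    using assms(6,8) P Q h_onto by blast+
  ultimately show ?thesis
    using Phi_less_iff[of B D x y] Phi_less_iff[of "h B" "h D" "g x" "g y"] h_less assms(5-8) False
    by blast
qed

lemma glue_block_isos:
  assumes P: "P \<subseteq> Phi_carrier A lt" and Q: "Q \<subseteq> Phi_carrier A lt"
    and h: "order_iso_betw h P (Phi_less A lt) Q (Phi_less A lt)"
    and g: "\<forall>B\<in>P. order_iso_betw g B lt (h B) lt"
  shows "sp_iso A lt g (\<Union>P) (\<Union>Q)"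
proof -
  have g_onto: "g ` B = h B" if "B \<in> P" for B
    using g that unfolding order_iso_betw_def bij_betw_def by blast
  have carrier: "B \<in> Phi_carrier A lt" "h B \<in> Phi_carrier A lt" if "B \<in> P" for B
    using that P Q h unfolding order_iso_betw_def bij_betw_def by blast+
  have ord: "\<forall>x\<in>\<Union>P. \<forall>y\<in>\<Union>P. lt x y \<longleftrightarrow> lt (g x) (g y)"
    using glue_block_isos_order_iff[OF P Q h g] by blast
  have "\<Union>P \<subseteq> A"
    using P Phi_carrier_subset by blast
  have "\<forall>x\<in>\<Union>P. \<not> lt (g x) (g x)"
  proof
    fix x
    assume "x \<in> \<Union>P"
    then obtain B where "B \<in> P" "x \<in> B"
      by blast
    then have "g x \<in> A"
      using g_onto Phi_carrier_subset[OF carrier(2)] by blast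
    then show "\<not> lt (g x) (g x)"
      by (rule lt_irrefl)
  qed
  then have "inj_on g (\<Union>P)"
    using inj_on_if_order_iff[where r' = lt, OF strict_linear_subset[OF \<open>\<Union>P \<subseteq> A\<close>] _ ord]
    by blast
  moreover have "g ` \<Union>P = \<Union>Q"
    using g_onto h unfolding order_iso_betw_def bij_betw_def by (auto simp: image_Union)
  moreover have "g (sc x) = sc (g x) \<and> g (pc x) = pc (g x)" if x: "x \<in> \<Union>P" for x
  proof -
    obtain B where "B \<in> P" "x \<in> B"
      using x by blast
    then show ?thesis
      using block_iso_commutes_succ block_iso_commutes_pred carrier g by blast
  qed
  ultimately show ?thesis
    unfolding sp_iso_def order_iso_betw_def bij_betw_def using ord by blast
qed

lemma lift_col_iso:
  assumes P: "P \<subseteq> Phi_carrier A lt" and Q: "Q \<subseteq> Phi_carrier A lt"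
    and h: "col_iso (Phi_less A lt) (Phi_col A lt) h P Q"
    and "S \<subseteq> P" and f: "\<forall>B\<in>S. order_iso_betw f B lt (h B) lt"
  obtains g where "sp_iso A lt g (\<Union>P) (\<Union>Q)" "\<forall>B\<in>P. g ` B = h B" "\<forall>x\<in>\<Union>S. g x = f x"
proof -
  have h_iso: "order_iso_betw h P (Phi_less A lt) Q (Phi_less A lt)"
    and h_col: "\<forall>B\<in>P. \<forall>c. Phi_col A lt B c \<longleftrightarrow> Phi_col A lt (h B) c"
    using h unfolding col_iso_def by auto
  have "h B \<in> Q" if "B \<in> P" for B
    using h_iso that unfolding order_iso_betw_def bij_betw_def by blast
  then have "\<forall>B\<in>P. \<exists>\<phi>. order_iso_betw \<phi> B lt (h B) lt"
    using same_colours_iso P Q h_col by blast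
  then obtain \<sigma> where \<sigma>: "\<forall>B\<in>P. order_iso_betw (\<sigma> B) B lt (h B) lt"
    by (metis bchoice)
  define g where "g x = (if x \<in> \<Union>S then f x else \<sigma> (blk x) x)" for x
  have "order_iso_betw g B lt (h B) lt" if B: "B \<in> P" for B
  proof (cases "B \<in> S")
    case True
    then show ?thesis
      using f order_iso_betw_cong g_def by fastforce
  next
    case False
    have "g x = \<sigma> B x" if "x \<in> B" for x
    proof -
      have block: "B = blk x"
        using Phi_carrier_block P B that by blast
      moreover have "x \<notin> \<Union>S"
        using block Phi_carrier_block P \<open>S \<subseteq> P\<close> False by blast
      ultimately show ?thesis
        unfolding g_def by simp
    qed
    then show ?thesis
      using \<sigma> B order_iso_betw_cong by blast
  qed
  then have blockwise: "\<forall>B\<in>P. order_iso_betw g B lt (h B) lt"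
    by blast
  then have "sp_iso A lt g (\<Union>P) (\<Union>Q)"
    by (rule glue_block_isos[OF P Q h_iso])
  moreover have "\<forall>B\<in>P. g ` B = h B"
    using blockwise unfolding order_iso_betw_def bij_betw_def by blast
  moreover have "\<forall>x\<in>\<Union>S. g x = f x"
    unfolding g_def by simp
  ultimately show ?thesis
    using that by blast
qed

lemma sp_iso_induces_col_iso:
  assumes "X \<subseteq> A" "V \<subseteq> A" and f: "sp_iso A lt f (\<Union> (blk ` X)) V"
  shows "col_iso (Phi_less A lt) (Phi_col A lt) ((`) f) (blk ` X) (blk ` (f ` X))"
proof -
  let ?U = "\<Union> (blk ` X)"
  have inj: "inj_on f ?U" and onto: "f ` ?U = V"
    and ord: "\<forall>x\<in>?U. \<forall>y\<in>?U. lt x y \<longleftrightarrow> lt (f x) (f y)"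
    and comm: "\<forall>z\<in>?U. f (sc z) = sc (f z) \<and> f (pc z) = pc (f z)"
    using f unfolding sp_iso_def order_iso_betw_def bij_betw_def by auto
  have blocks_in_U: "B \<subseteq> ?U" if "B \<in> blk ` X" for B
    using that by blast
  have "f ` blk x = blk (f x)" if "x \<in> X" for x
  proof (rule image_block_eq[OF Union_blocks_closed comm])
    show "x \<in> ?U" "x \<in> A"
      using that assms(1) in_block by blast+
    then show "f x \<in> A"
      using onto assms(2) by blast
  qed
  then have "(`) f ` blk ` X = blk ` f ` X"
    by (simp add: image_image)
  moreover have "inj_on ((`) f) (blk ` X)"
    using inj_on_image_eq_iff[OF inj] blocks_in_U unfolding inj_on_def by blast
  moreover have "\<forall>B\<in>blk ` X. \<forall>D\<in>blk ` X. Phi_less A lt B D \<longleftrightarrow> Phi_less A lt (f ` B) (f ` D)"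
    using Phi_less_image[OF inj ord] blocks_in_U by blast
  moreover have "\<forall>B\<in>blk ` X. \<forall>c. Phi_col A lt B c \<longleftrightarrow> Phi_col A lt (f ` B) c"
    using Phi_col_order_iso_invariant order_iso_betw_restrict[OF inj ord] blocks_in_U by blast
  ultimately show ?thesis
    unfolding col_iso_def order_iso_betw_def bij_betw_def by blast
qed

lemma finite_blocks_generated:
  assumes "finite P" "P \<subseteq> Phi_carrier A lt"
  obtains X where "finite X" "X \<subseteq> A" "gen_sp A lt X = \<Union>P"
proof -
  obtain X where "X \<subseteq> A" "finite X" "P = blk ` X"
    using finite_subset_image[OF assms[unfolded Phi_carrier_def]] by blast
  moreover have "gen_sp A lt X = \<Union>P"
    using gen_sp_eq_Union_blocks[OF \<open>X \<subseteq> A\<close>] \<open>P = blk ` X\<close> by simp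
  ultimately show ?thesis
    using that by blast
qed

lemma homogeneous_col_if_homogeneous_sp:
  assumes "homogeneous_sp A lt"
  shows "homogeneous_col (Phi_carrier A lt) (Phi_less A lt) (Phi_col A lt)"
  unfolding homogeneous_col_iff
proof (intro allI impI, elim conjE)
  fix P Q h
  assume "finite P" and P: "P \<subseteq> Phi_carrier A lt" and Q: "Q \<subseteq> Phi_carrier A lt"
    and h: "col_iso (Phi_less A lt) (Phi_col A lt) h P Q"
  have "\<exists>F. sp_iso A lt F (\<Union>P) (\<Union>Q) \<and> (\<forall>B\<in>P. F ` B = h B)"
    by (rule lift_col_iso[OF P Q h empty_subsetI, where f = id]) blast+
  then obtain F where F: "sp_iso A lt F (\<Union>P) (\<Union>Q)" "\<forall>B\<in>P. F ` B = h B"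
    by blast
  have "finite Q"
    using h \<open>finite P\<close> bij_betw_finite unfolding col_iso_def order_iso_betw_def by blast
  obtain X Y where "finite X" "X \<subseteq> A" "gen_sp A lt X = \<Union>P"
    and "finite Y" "Y \<subseteq> A" "gen_sp A lt Y = \<Union>Q"
    using finite_blocks_generated \<open>finite P\<close> P \<open>finite Q\<close> Q by metis
  then obtain G where G: "sp_iso A lt G A A" "\<forall>x\<in>\<Union>P. G x = F x"
    using assms F(1) unfolding homogeneous_sp_iff by metis
  have "G ` A = A"
    using G(1) unfolding sp_iso_def order_iso_betw_def bij_betw_def by blast
  then have "col_iso (Phi_less A lt) (Phi_col A lt) ((`) G) (Phi_carrier A lt) (Phi_carrier A lt)"
    using sp_iso_induces_col_iso[of A A G] G(1) Union_Phi_carrier unfolding Phi_carrier_def by simp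
  moreover have "\<forall>B\<in>P. G ` B = h B"
    using F(2) G(2) by (metis UnionI image_cong)
  ultimately show "\<exists>g. col_iso (Phi_less A lt) (Phi_col A lt) g (Phi_carrier A lt) (Phi_carrier A lt) \<and>
      (\<forall>B\<in>P. g B = h B)"
    by blast
qed

lemma homogeneous_sp_if_homogeneous_col:
  assumes "homogeneous_col (Phi_carrier A lt) (Phi_less A lt) (Phi_col A lt)"
  shows "homogeneous_sp A lt"
  unfolding homogeneous_sp_iff
proof (intro allI impI, elim conjE)
  fix X Y f
  assume "finite X" "X \<subseteq> A" "finite Y" "Y \<subseteq> A"
    and f: "sp_iso A lt f (gen_sp A lt X) (gen_sp A lt Y)"
  have genX: "gen_sp A lt X = \<Union> (blk ` X)"
    using gen_sp_eq_Union_blocks \<open>X \<subseteq> A\<close> by blast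
  have "gen_sp A lt Y \<subseteq> A"
    using gen_sp_eq_Union_blocks \<open>Y \<subseteq> A\<close> block_subset by (simp add: UN_least)
  have inj: "inj_on f (gen_sp A lt X)" and onto: "f ` gen_sp A lt X = gen_sp A lt Y"
    and ord: "\<forall>x\<in>gen_sp A lt X. \<forall>y\<in>gen_sp A lt X. lt x y \<longleftrightarrow> lt (f x) (f y)"
    using f unfolding sp_iso_def order_iso_betw_def bij_betw_def by auto
  have h0: "col_iso (Phi_less A lt) (Phi_col A lt) ((`) f) (blk ` X) (blk ` (f ` X))"
    using sp_iso_induces_col_iso[OF \<open>X \<subseteq> A\<close> \<open>gen_sp A lt Y \<subseteq> A\<close>] f genX by simp
  have "f ` X \<subseteq> A"
    using onto \<open>gen_sp A lt Y \<subseteq> A\<close> genX \<open>X \<subseteq> A\<close> in_block by blast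
  then have "blk ` X \<subseteq> Phi_carrier A lt" "blk ` (f ` X) \<subseteq> Phi_carrier A lt"
    using \<open>X \<subseteq> A\<close> unfolding Phi_carrier_def by blast+
  then obtain h where h: "col_iso (Phi_less A lt) (Phi_col A lt) h (Phi_carrier A lt) (Phi_carrier A lt)"
    and h_ext: "\<forall>B\<in>blk ` X. h B = f ` B"
    using assms h0 \<open>finite X\<close> unfolding homogeneous_col_iff by (metis finite_imageI)
  have "\<forall>B\<in>blk ` X. order_iso_betw f B lt (h B) lt"
  proof
    fix B
    assume B: "B \<in> blk ` X"
    then have "B \<subseteq> gen_sp A lt X"
      unfolding genX by blast
    then show "order_iso_betw f B lt (h B) lt"
      unfolding h_ext[rule_format, OF B] by (rule order_iso_betw_restrict[OF inj ord])
  qed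
  then have "\<exists>g. sp_iso A lt g (\<Union> (Phi_carrier A lt)) (\<Union> (Phi_carrier A lt)) \<and>
      (\<forall>x\<in>\<Union> (blk ` X). g x = f x)"
    by (rule lift_col_iso[OF subset_refl subset_refl h \<open>blk ` X \<subseteq> Phi_carrier A lt\<close>]) blast+
  then show "\<exists>g. sp_iso A lt g A A \<and> (\<forall>x\<in>gen_sp A lt X. g x = f x)"
    unfolding Union_Phi_carrier genX .
qed

end

theorem mainTheorem3:
  fixes A :: "'a set" and lt :: "'a \<Rightarrow> 'a \<Rightarrow> bool"
  assumes "strict_linear_on A lt"
  shows "homogeneous_sp A lt \<longleftrightarrow>
         homogeneous_col (Phi_carrier A lt) (Phi_less A lt) (Phi_col A lt)"
proof -
  interpret linear_ordering A lt
    using assms by unfold_locales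
  show ?thesis
    using homogeneous_col_if_homogeneous_sp homogeneous_sp_if_homogeneous_col by blast
qed

end
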